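(* Let $F$ attain its minimum $F^*$ at some $x^*\in\operatorname{dom}h$. Let $x_0\in\mathbb{E}$, let $(a_k)_{k\ge1}$ be positive numbers and $(\delta_k)_{k\ge1}$ nonnegative numbers. Suppose that for each $k\ge0$, points $x_{k+1}$ and vectors $g_{k+1}\in\partial\Phi_{k+1}(x_{k+1})$ are given, where $\Phi_{k+1}(x)=a_{k+1}F(x)+\frac12\|x-x_k\|^2$, such that $\|g_{k+1}\|_*\le\delta_{k+1}$, and set $F'(x_{k+1})=\frac1{a_{k+1}}\big(g_{k+1}-B(x_{k+1}-x_k)\big)\in\partial F(x_{k+1})$. Then for every $k\ge1$, $$\sum_{i=1}^ka_i(F(x_i)-F^* )+\frac12\sum_{i=1}^ka_i^2\|F'(x_i)\|_*^2+\frac12\|x_k-x^*\|^2\le\frac12\Big(\|x_0-x^*\|+\sum_{i=1}^k\delta_i\Big)^2.$$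
   Context: $\mathbb{E}$ is a finite-dimensional real vector space with dual $\mathbb{E}^*$; $B:\mathbb{E}\to\mathbb{E}^*$ is a fixed self-adjoint positive-definite operator, $\|x\|=\langle Bx,x\rangle^{1/2}$, $\|g\|_*=\langle g,B^{-1}g\rangle^{1/2}$. $F=f+h$, where $h:\mathbb{E}\to\mathbb{R}\cup\{+\infty\}$ is proper closed convex and $f$ is convex and $p$ times differentiable ($p\ge2$) on an open convex set containing $\operatorname{dom}h$ with Lipschitz continuous $p$-th derivative on $\operatorname{dom}h$. $\partial$ denotes the convex subdifferential. *)

theory Defs
  imports "HOL-Analysis.Analysis" "HOL-Library.Extended_Real"
begin

text \<open>The space E is modelled as a Euclidean space 'a; its dual is identified with 'a
  via the standard inner product, so the pairing <g,x> is g \<bullet> x and B : E \<rightarrow> E* is a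
  linear map 'a \<Rightarrow> 'a.\<close>

definition self_adjoint_pd :: "('a::euclidean_space \<Rightarrow> 'a) \<Rightarrow> bool" where
  "self_adjoint_pd B \<longleftrightarrow> linear B \<and> (\<forall>x y. B x \<bullet> y = x \<bullet> B y) \<and> (\<forall>x. x \<noteq> 0 \<longrightarrow> B x \<bullet> x > 0)"

definition normB :: "('a::euclidean_space \<Rightarrow> 'a) \<Rightarrow> 'a \<Rightarrow> real" where
  "normB B x = sqrt (B x \<bullet> x)"

definition dualnormB :: "('a::euclidean_space \<Rightarrow> 'a) \<Rightarrow> 'a \<Rightarrow> real" where
  "dualnormB B g = sqrt (g \<bullet> inv B g)"

definition edom :: "('a \<Rightarrow> ereal) \<Rightarrow> 'a set" where
  "edom h = {x. h x < \<infinity>}"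

definition proper_closed_convex :: "('a::euclidean_space \<Rightarrow> ereal) \<Rightarrow> bool" where
  "proper_closed_convex h \<longleftrightarrow>
     (\<forall>x. h x \<noteq> -\<infinity>) \<and> (\<exists>x. h x < \<infinity>) \<and>
     convex {(x, t::real). h x \<le> ereal t} \<and> closed {(x, t::real). h x \<le> ereal t}"

definition subdiff :: "('a::euclidean_space \<Rightarrow> ereal) \<Rightarrow> 'a \<Rightarrow> 'a set" where
  "subdiff \<phi> x = {g. \<bar>\<phi> x\<bar> \<noteq> \<infinity> \<and> (\<forall>y. \<phi> y \<ge> \<phi> x + ereal (g \<bullet> (y - x)))}"

text \<open>Iterated directional (Frechet) derivatives: Dk k f x hs = D^k f(x)[hs 0, ..., hs (k-1)].\<close>
fun Dk :: "nat \<Rightarrow> ('a::euclidean_space \<Rightarrow> real) \<Rightarrow> 'a \<Rightarrow> (nat \<Rightarrow> 'a) \<Rightarrow> real" where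
  "Dk 0 f x hs = f x"
| "Dk (Suc k) f x hs = frechet_derivative (\<lambda>y. Dk k f y hs) (at x) (hs k)"

definition p_smooth_lipschitz ::
  "('a::euclidean_space \<Rightarrow> 'a) \<Rightarrow> nat \<Rightarrow> ('a \<Rightarrow> real) \<Rightarrow> 'a set \<Rightarrow> 'a set \<Rightarrow> bool" where
  "p_smooth_lipschitz B p f U S \<longleftrightarrow>
     (\<forall>k<p. \<forall>hs. \<forall>x\<in>U. (\<lambda>y. Dk k f y hs) differentiable (at x)) \<and>
     (\<exists>L. \<forall>x\<in>S. \<forall>y\<in>S. \<forall>hs. (\<forall>i<p. normB B (hs i) \<le> 1) \<longrightarrow>
          \<bar>Dk p f x hs - Dk p f y hs\<bar> \<le> L * normB B (x - y))"

end

theory Submission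
  imports Defs
begin

(* Let F'_k = (g_k - B (x_k - x_(k-1))) / a_k and r_k = ||x_k - x*||.  Because Phi_k is a_k F plus
   a differentiable quadratic, the subgradient g_k of Phi_k gives the subgradient a_k F'_k of
   a_k F at x_k.  The subgradient inequality of F at x_k against x*, together with the
   three-point identity of the B-norm and Cauchy-Schwarz for the dual norm, yields
     a_k (F x_k - F* ) + 1/2 a_k^2 ||F'_k||_*^2 + 1/2 r_k^2 <= 1/2 (r_(k-1) + delta_k)^2.
   Summing these one-step bounds by induction only needs r_k <= r_0 + (sum of delta_i),
   which the induction hypothesis itself provides. *)

lemma le_of_le_add_mult_small:
  fixes K L M :: real
  assumes "\<And>t. 0 < t \<Longrightarrow> t \<le> 1 \<Longrightarrow> K \<le> L + t * M"
  shows "K \<le> L"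
proof -
  have "((\<lambda>t. L + t * M) \<longlongrightarrow> L + 0 * M) (at_right 0)"
    by (intro tendsto_intros)
  moreover have "\<forall>\<^sub>F t in at_right 0. K \<le> L + t * M"
    unfolding eventually_at_right[OF zero_less_one] using assms by (intro exI[of _ 1]) auto
  ultimately show ?thesis
    using tendsto_lowerbound[OF _ _ trivial_limit_at_right_real] by simp
qed

lemma convex_epigraph_ereal_le:
  fixes h :: "'a::real_vector \<Rightarrow> ereal"
  assumes epi: "convex {(x, s::real). h x \<le> ereal s}"
    and "h x \<le> ereal a" "h y \<le> ereal b" "0 \<le> t" "t \<le> 1"
  shows "h ((1 - t) *\<^sub>R x + t *\<^sub>R y) \<le> ereal ((1 - t) * a + t * b)"
proof -
  have "(1 - t) *\<^sub>R (x, a) + t *\<^sub>R (y, b) \<in> {(x, s::real). h x \<le> ereal s}"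
    by (rule convexD[OF epi]) (use assms in auto)
  then show ?thesis
    by simp
qed

lemma convex_on_edom_ereal_add:
  fixes f :: "'a::real_vector \<Rightarrow> real" and h :: "'a \<Rightarrow> ereal"
  assumes proper: "\<And>x. h x \<noteq> -\<infinity>" and epi: "convex {(x, s::real). h x \<le> ereal s}"
    and U: "edom h \<subseteq> U" and f: "convex_on U f"
  shows "convex_on (edom (\<lambda>y. ereal (f y) + h y)) (\<lambda>y. real_of_ereal (ereal (f y) + h y))"
proof -
  define \<eta> where "\<eta> y = real_of_ereal (h y)" for y
  have h_eq: "h y = ereal (\<eta> y)" if "y \<in> edom h" for y
    using that proper[of y] by (cases "h y") (auto simp: edom_def \<eta>_def)
  have edom_eq: "edom (\<lambda>y. ereal (f y) + h y) = edom h"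
    using proper by (auto simp: edom_def)
  have combination: "h z \<le> ereal ((1 - t) * \<eta> x + t * \<eta> y) \<and> f z \<le> (1 - t) * f x + t * f y"
    if "x \<in> edom h" "y \<in> edom h" "0 \<le> t" "t \<le> 1" and z: "z = (1 - t) *\<^sub>R x + t *\<^sub>R y" for x y t z
    using convex_epigraph_ereal_le[OF epi, of x "\<eta> x" y "\<eta> y" t] convex_onD[OF f, of t x y]
      h_eq that U by auto
  have "convex (edom h)"
  proof (rule convexI)
    fix x y and u v :: real
    assume "x \<in> edom h" "y \<in> edom h" "0 \<le> u" "0 \<le> v" "u + v = 1"
    then show "u *\<^sub>R x + v *\<^sub>R y \<in> edom h"
      using combination[of x y v] by (fastforce simp: edom_def eq_diff_eq[symmetric] le_less_trans)
  qed
  moreover have "real_of_ereal (ereal (f z) + h z)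
      \<le> (1 - t) * real_of_ereal (ereal (f x) + h x) + t * real_of_ereal (ereal (f y) + h y)"
    if "x \<in> edom h" "y \<in> edom h" "0 < t" "t < 1" and z: "z = (1 - t) *\<^sub>R x + t *\<^sub>R y" for x y t z
  proof -
    have hz: "h z \<le> ereal ((1 - t) * \<eta> x + t * \<eta> y)" and fz: "f z \<le> (1 - t) * f x + t * f y"
      using combination[OF that(1,2) _ _ z] that(3,4) by auto
    then have "z \<in> edom h"
      by (auto simp: edom_def le_less_trans)
    with hz have "\<eta> z \<le> (1 - t) * \<eta> x + t * \<eta> y"
      by (simp add: h_eq)
    with fz show ?thesis
      using h_eq[OF \<open>z \<in> edom h\<close>] h_eq[OF that(1)] h_eq[OF that(2)] by (simp add: algebra_simps)
  qed
  ultimately show ?thesis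
    unfolding edom_eq by (intro convex_onI) auto
qed

locale pd_operator =
  fixes B :: "'a::euclidean_space \<Rightarrow> 'a"
  assumes self_adjoint_pd: "self_adjoint_pd B"
begin

lemma linear_B: "linear B"
  using self_adjoint_pd by (simp add: self_adjoint_pd_def)

lemma B_inner_commute: "B x \<bullet> y = x \<bullet> B y"
  using self_adjoint_pd by (simp add: self_adjoint_pd_def)

lemma B_inner_self_nonneg: "0 \<le> B x \<bullet> x"
  using self_adjoint_pd linear_0[OF linear_B]
  by (cases "x = 0") (auto simp: self_adjoint_pd_def less_imp_le)

lemma B_inner_self_eq_0: "B x \<bullet> x = 0 \<longleftrightarrow> x = 0"
  using self_adjoint_pd linear_0[OF linear_B] by (force simp: self_adjoint_pd_def)

lemma inj_B: "inj B"
proof (rule injI)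
  fix x y assume "B x = B y"
  then have "B (x - y) \<bullet> (x - y) = 0"
    by (simp add: linear_diff[OF linear_B])
  then show "x = y"
    by (simp add: B_inner_self_eq_0)
qed

lemma B_inv_B [simp]: "B (inv B g) = g"
  using linear_inj_imp_surj[OF linear_B inj_B] by (simp add: surj_f_inv_f)

lemma inv_B_B [simp]: "inv B (B x) = x"
  using inj_B by simp

lemma linear_inv_B: "linear (inv B)"
  using inj_linear_imp_inv_linear[OF linear_B inj_B] .

lemma normB_nonneg: "0 \<le> normB B x"
  by (simp add: normB_def B_inner_self_nonneg)

lemma normB_power2: "(normB B x)\<^sup>2 = B x \<bullet> x"
  using B_inner_self_nonneg by (simp add: normB_def)

lemma dualnormB_eq_normB_inv: "dualnormB B g = normB B (inv B g)"
  by (simp add: normB_def dualnormB_def)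

lemma dualnormB_nonneg: "0 \<le> dualnormB B g"
  by (simp add: dualnormB_eq_normB_inv normB_nonneg)

lemma dualnormB_power2: "(dualnormB B g)\<^sup>2 = g \<bullet> inv B g"
  by (simp add: dualnormB_eq_normB_inv normB_power2)

lemma normB_add_power2:
  "(normB B (u + v))\<^sup>2 = (normB B u)\<^sup>2 + 2 * (B u \<bullet> v) + (normB B v)\<^sup>2"
  by (simp add: normB_power2 linear_add[OF linear_B] inner_add_left inner_add_right
      B_inner_commute[of v u] inner_commute[of v "B u"])

lemma normB_diff_power2:
  "(normB B (u - v))\<^sup>2 = (normB B u)\<^sup>2 - 2 * (B u \<bullet> v) + (normB B v)\<^sup>2"
  by (simp add: normB_power2 linear_diff[OF linear_B] inner_diff_left inner_diff_right
      B_inner_commute[of v u] inner_commute[of v "B u"])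

lemma dualnormB_diff_B_power2:
  "(dualnormB B (g - B u))\<^sup>2 = (dualnormB B g)\<^sup>2 - 2 * (g \<bullet> u) + (normB B u)\<^sup>2"
  by (simp add: dualnormB_power2 normB_power2 linear_diff[OF linear_inv_B] inner_diff_left
      inner_diff_right B_inner_commute[of u "inv B g"] inner_commute[of u g])

lemma normB_scaleR: "normB B (c *\<^sub>R x) = \<bar>c\<bar> * normB B x"
proof -
  have "B (c *\<^sub>R x) \<bullet> (c *\<^sub>R x) = c\<^sup>2 * (B x \<bullet> x)"
    by (simp add: linear_scale[OF linear_B] power2_eq_square)
  then show ?thesis
    unfolding normB_def by (simp add: real_sqrt_mult)
qed

lemma dualnormB_scaleR: "dualnormB B (c *\<^sub>R g) = \<bar>c\<bar> * dualnormB B g"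
  by (simp add: dualnormB_eq_normB_inv linear_scale[OF linear_inv_B] normB_scaleR)

lemma B_inner_le_normB: "B u \<bullet> v \<le> normB B u * normB B v"
proof -
  let ?nu = "normB B u" and ?nv = "normB B v"
  have "0 \<le> (normB B (?nv *\<^sub>R u - ?nu *\<^sub>R v))\<^sup>2"
    by simp
  also have "\<dots> = 2 * ?nu * ?nv * (?nu * ?nv - B u \<bullet> v)"
    using normB_diff_power2[of "?nv *\<^sub>R u" "?nu *\<^sub>R v"] normB_nonneg[of u] normB_nonneg[of v]
    by (simp add: normB_scaleR linear_scale[OF linear_B] power2_eq_square algebra_simps)
  finally have *: "0 \<le> ?nu * ?nv * (?nu * ?nv - B u \<bullet> v)"
    by simp
  show ?thesis
  proof (cases "?nu * ?nv = 0")
    case True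
    then have "u = 0 \<or> v = 0"
      using B_inner_self_eq_0 normB_power2 by (metis mult_eq_0_iff power2_eq_square)
    then show ?thesis
      using True linear_0[OF linear_B] by auto
  next
    case False
    then have "0 < ?nu * ?nv"
      using normB_nonneg[of u] normB_nonneg[of v] by (simp add: less_le)
    with * show ?thesis
      by (simp add: zero_le_mult_iff)
  qed
qed

lemma inner_le_dualnormB_normB: "g \<bullet> v \<le> dualnormB B g * normB B v"
  using B_inner_le_normB[of "inv B g" v] by (simp add: dualnormB_eq_normB_inv)

lemma prox_step_estimate:
  assumes "s \<le> (g - B (r - c)) \<bullet> (r - y)"
  shows "s + 1/2 * (dualnormB B (g - B (r - c)))\<^sup>2 + 1/2 * (normB B (r - y))\<^sup>2
           \<le> 1/2 * (normB B (c - y) + dualnormB B g)\<^sup>2"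
proof -
  define u w where "u = r - c" and "w = r - y"
  have cy: "c - y = w - u"
    by (simp add: u_def w_def)
  have identity:
    "1/2 * (dualnormB B (g - B u))\<^sup>2 + 1/2 * (normB B w)\<^sup>2 + (g - B u) \<bullet> w
       = 1/2 * (normB B (c - y))\<^sup>2 + g \<bullet> (c - y) + 1/2 * (dualnormB B g)\<^sup>2"
    unfolding cy by (simp add: dualnormB_diff_B_power2 normB_diff_power2 inner_diff_left inner_diff_right
        B_inner_commute[of w u] inner_commute[of w "B u"] field_simps)
  have "g \<bullet> (c - y) \<le> dualnormB B g * normB B (c - y)"
    by (rule inner_le_dualnormB_normB)
  with assms identity show ?thesis
    unfolding u_def w_def by (simp add: power2_sum algebra_simps)
qed

lemma subdiff_of_subdiff_add_half_normB_power2: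
  fixes \<phi> :: "'a \<Rightarrow> ereal"
  assumes conv: "convex_on (edom \<phi>) (\<lambda>z. real_of_ereal (\<phi> z))"
    and proper: "\<And>z. \<phi> z \<noteq> -\<infinity>"
    and A: "0 < A"
    and g: "g \<in> subdiff (\<lambda>z. ereal A * \<phi> z + ereal (1/2 * (normB B (z - c))\<^sup>2)) x"
  shows "(1 / A) *\<^sub>R (g - B (x - c)) \<in> subdiff \<phi> x"
proof -
  define \<psi> where "\<psi> z = real_of_ereal (\<phi> z)" for z
  have \<phi>_eq: "\<phi> z = ereal (\<psi> z)" if "z \<in> edom \<phi>" for z
    using that proper[of z] by (cases "\<phi> z") (auto simp: edom_def \<psi>_def)
  have fin_x: "\<bar>\<phi> x\<bar> \<noteq> \<infinity>"
    using g A proper[of x] by (cases "\<phi> x") (auto simp: subdiff_def)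
  then have x: "x \<in> edom \<phi>"
    by (cases "\<phi> x") (auto simp: edom_def)
  have subgrad: "A * \<psi> x + 1/2 * (normB B (x - c))\<^sup>2 + g \<bullet> (z - x)
      \<le> A * \<psi> z + 1/2 * (normB B (z - c))\<^sup>2" if "z \<in> edom \<phi>" for z
  proof -
    have "ereal A * \<phi> x + ereal (1/2 * (normB B (x - c))\<^sup>2) + ereal (g \<bullet> (z - x))
        \<le> ereal A * \<phi> z + ereal (1/2 * (normB B (z - c))\<^sup>2)"
      using g by (simp add: subdiff_def)
    then show ?thesis
      by (simp add: \<phi>_eq[OF x] \<phi>_eq[OF that])
  qed
  have "\<psi> x + (1 / A) *\<^sub>R (g - B (x - c)) \<bullet> (y - x) \<le> \<psi> y" if y: "y \<in> edom \<phi>" for y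
  proof -
    define u d where "u = x - c" and "d = y - x"
    (* Compare with z = x + t d: convexity of phi and the expansion of ||z - c||^2 leave an
       error of order t^2, which disappears after dividing by t and letting t tend to 0. *)
    have "g \<bullet> d \<le> A * (\<psi> y - \<psi> x) + B u \<bullet> d + t * (1/2 * (normB B d)\<^sup>2)"
      if t: "0 < t" "t \<le> 1" for t
    proof -
      define z where "z = (1 - t) *\<^sub>R x + t *\<^sub>R y"
      have z: "z \<in> edom \<phi>"
        using convexD_alt[OF convex_on_imp_convex[OF conv] x y, of t] t by (simp add: z_def)
      have "\<psi> z \<le> (1 - t) * \<psi> x + t * \<psi> y"
        using convex_onD[OF conv, of t x y] t x y by (simp add: z_def \<psi>_def)
      then have "A * \<psi> z \<le> A * ((1 - t) * \<psi> x + t * \<psi> y)"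
        using A by (simp add: mult_left_mono)
      also have "\<dots> = A * \<psi> x + t * (A * (\<psi> y - \<psi> x))"
        by (simp add: algebra_simps)
      finally have "A * \<psi> z \<le> A * \<psi> x + t * (A * (\<psi> y - \<psi> x))" .
      moreover have "z - x = t *\<^sub>R d"
        by (simp add: z_def d_def algebra_simps)
      moreover have "(normB B (z - c))\<^sup>2 = (normB B u)\<^sup>2 + t * (2 * (B u \<bullet> d)) + t * (t * (normB B d)\<^sup>2)"
      proof -
        have zc: "z - c = u + t *\<^sub>R d"
          by (simp add: z_def u_def d_def algebra_simps)
        show ?thesis
          unfolding zc normB_add_power2
          using t by (simp add: normB_scaleR linear_scale[OF linear_B] power_mult_distrib power2_eq_square)
      qed
      ultimately have "t * (g \<bullet> d) \<le> t * (A * (\<psi> y - \<psi> x) + B u \<bullet> d + t * (1/2 * (normB B d)\<^sup>2))"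
        using subgrad[OF z] unfolding u_def[symmetric] by (simp add: algebra_simps)
      then show ?thesis
        using t by simp
    qed
    then have "g \<bullet> d \<le> A * (\<psi> y - \<psi> x) + B u \<bullet> d"
      by (rule le_of_le_add_mult_small)
    then have "(g - B u) \<bullet> d / A \<le> \<psi> y - \<psi> x"
      using A by (simp add: pos_divide_le_eq inner_diff_left mult.commute)
    then show ?thesis
      by (simp add: u_def d_def)
  qed
  then have "\<phi> x + ereal ((1 / A) *\<^sub>R (g - B (x - c)) \<bullet> (y - x)) \<le> \<phi> y" for y
    using \<phi>_eq[OF x] \<phi>_eq[of y] by (cases "y \<in> edom \<phi>") (auto simp: edom_def not_less)
  with fin_x show ?thesis
    by (simp add: subdiff_def)
qed

lemma inexact_prox_step:
  fixes \<phi> :: "'a \<Rightarrow> ereal"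
  assumes conv: "convex_on (edom \<phi>) (\<lambda>z. real_of_ereal (\<phi> z))"
    and proper: "\<And>z. \<phi> z \<noteq> -\<infinity>"
    and A: "0 < A"
    and g: "g \<in> subdiff (\<lambda>z. ereal A * \<phi> z + ereal (1/2 * (normB B (z - c))\<^sup>2)) x"
    and g_small: "dualnormB B g \<le> \<delta>"
    and y: "y \<in> edom \<phi>" and y_min: "\<forall>z. \<phi> y \<le> \<phi> z"
  defines "s \<equiv> real_of_ereal (ereal A * (\<phi> x - \<phi> y))"
  shows "ereal A * (\<phi> x - \<phi> y) = ereal s" and "0 \<le> s"
    and "s + 1/2 * (A\<^sup>2 * (dualnormB B ((1 / A) *\<^sub>R (g - B (x - c))))\<^sup>2) + 1/2 * (normB B (x - y))\<^sup>2
           \<le> 1/2 * (normB B (c - y) + \<delta>)\<^sup>2"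
proof -
  define G where "G = g - B (x - c)"
  have sub: "(1 / A) *\<^sub>R G \<in> subdiff \<phi> x"
    unfolding G_def using subdiff_of_subdiff_add_half_normB_power2[OF conv proper A g] .
  obtain \<phi>x \<phi>y where \<phi>x: "\<phi> x = ereal \<phi>x" and \<phi>y: "\<phi> y = ereal \<phi>y"
    using sub y proper[of y] by (cases "\<phi> x"; cases "\<phi> y") (auto simp: subdiff_def edom_def)
  have s: "s = A * (\<phi>x - \<phi>y)"
    by (simp add: s_def \<phi>x \<phi>y)
  then show "ereal A * (\<phi> x - \<phi> y) = ereal s"
    by (simp add: \<phi>x \<phi>y)
  show "0 \<le> s"
    using y_min[rule_format, of x] A by (simp add: s \<phi>x \<phi>y)
  have "\<phi> x + ereal ((1 / A) *\<^sub>R G \<bullet> (y - x)) \<le> \<phi> y"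
    using sub by (simp add: subdiff_def)
  then have "\<phi>x + (1 / A) * (G \<bullet> (y - x)) \<le> \<phi>y"
    by (simp add: \<phi>x \<phi>y)
  then have "s \<le> G \<bullet> (x - y)"
    using A by (simp add: s field_simps inner_diff_right)
  then have "s + 1/2 * (dualnormB B G)\<^sup>2 + 1/2 * (normB B (x - y))\<^sup>2 \<le> 1/2 * (normB B (c - y) + dualnormB B g)\<^sup>2"
    unfolding G_def by (rule prox_step_estimate)
  also have "\<dots> \<le> 1/2 * (normB B (c - y) + \<delta>)\<^sup>2"
    using g_small normB_nonneg[of "c - y"] dualnormB_nonneg[of g] by (simp add: power_mono)
  finally show "s + 1/2 * (A\<^sup>2 * (dualnormB B ((1 / A) *\<^sub>R (g - B (x - c))))\<^sup>2) + 1/2 * (normB B (x - y))\<^sup>2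
           \<le> 1/2 * (normB B (c - y) + \<delta>)\<^sup>2"
    using A by (simp add: G_def[symmetric] dualnormB_scaleR power_mult_distrib power2_eq_square)
qed

end

lemma accumulate_step_bound:
  fixes e r \<delta> :: "nat \<Rightarrow> real"
  assumes e: "\<And>i. 0 \<le> e (Suc i)" and \<delta>: "\<And>i. 0 \<le> \<delta> (Suc i)" and r: "\<And>i. 0 \<le> r i"
    and step: "\<And>i. e (Suc i) + 1/2 * (r (Suc i))\<^sup>2 \<le> 1/2 * (r i + \<delta> (Suc i))\<^sup>2"
  shows "(\<Sum>i=1..k. e i) + 1/2 * (r k)\<^sup>2 \<le> 1/2 * (r 0 + (\<Sum>i=1..k. \<delta> i))\<^sup>2"
proof (induction k)
  case 0
  then show ?case by simp
next
  case (Suc k)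
  define S R where "S = (\<Sum>i=1..k. e i)" and "R = r 0 + (\<Sum>i=1..k. \<delta> i)"
  have e': "0 \<le> e i" and \<delta>': "0 \<le> \<delta> i" if "i \<in> {1..k}" for i
    using that e[of "i - 1"] \<delta>[of "i - 1"] by (simp_all add: Suc_diff_le)
  have "0 \<le> S"
    unfolding S_def by (rule sum_nonneg) (rule e')
  moreover have "0 \<le> R"
    unfolding R_def using r[of 0] sum_nonneg[of "{1..k}" \<delta>] \<delta>' by simp
  moreover have IH: "S + 1/2 * (r k)\<^sup>2 \<le> 1/2 * R\<^sup>2"
    using Suc.IH by (simp add: S_def R_def)
  ultimately have "(r k)\<^sup>2 \<le> R\<^sup>2"
    by linarith
  with \<open>0 \<le> R\<close> have "r k \<le> R"
    using power2_le_imp_le by blast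
  then have cross: "2 * r k * \<delta> (Suc k) \<le> 2 * R * \<delta> (Suc k)"
    using mult_right_mono[OF _ \<delta>[of k]] by simp
  have sum_e: "(\<Sum>i=1..Suc k. e i) = S + e (Suc k)"
    and sum_\<delta>: "r 0 + (\<Sum>i=1..Suc k. \<delta> i) = R + \<delta> (Suc k)"
    by (simp_all add: S_def R_def)
  show ?case
    unfolding sum_e sum_\<delta> power2_sum using IH cross step[of k, unfolded power2_sum]
    by (simp add: field_simps)
qed

theorem theorem5:
  fixes B :: "'a::euclidean_space \<Rightarrow> 'a"
    and f :: "'a \<Rightarrow> real" and h :: "'a \<Rightarrow> ereal" and U :: "'a set" and p :: nat
    and xstar :: 'a and x g :: "nat \<Rightarrow> 'a" and a \<delta> :: "nat \<Rightarrow> real"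
  defines "F \<equiv> (\<lambda>y. ereal (f y) + h y)"
  assumes B: "self_adjoint_pd B"
    and h: "proper_closed_convex h"
    and p: "p \<ge> 2"
    and U: "open U" "convex U" "edom h \<subseteq> U"
    and fconv: "convex_on U f"
    and fsmooth: "p_smooth_lipschitz B p f U (edom h)"
    and xstar_dom: "xstar \<in> edom h"
    and xstar_min: "\<forall>y. F xstar \<le> F y"
    and a_pos: "\<forall>k. a (Suc k) > 0"
    and \<delta>_nonneg: "\<forall>k. \<delta> (Suc k) \<ge> 0"
    and g_sub: "\<forall>k. g (Suc k) \<in> subdiff
                   (\<lambda>y. ereal (a (Suc k)) * F y + ereal (1/2 * (normB B (y - x k))\<^sup>2)) (x (Suc k))"
    and g_small: "\<forall>k. dualnormB B (g (Suc k)) \<le> \<delta> (Suc k)"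
  shows "\<forall>k\<ge>1. let F' = (\<lambda>i. (1 / a i) *\<^sub>R (g i - B (x i - x (i - 1)))) in
           (\<Sum>i=1..k. ereal (a i) * (F (x i) - F xstar))
           + ereal (1/2 * (\<Sum>i=1..k. (a i)\<^sup>2 * (dualnormB B (F' i))\<^sup>2))
           + ereal (1/2 * (normB B (x k - xstar))\<^sup>2)
           \<le> ereal (1/2 * (normB B (x 0 - xstar) + (\<Sum>i=1..k. \<delta> i))\<^sup>2)"
proof -
  interpret pd_operator B
    using B by unfold_locales
  have proper: "\<And>y. F y \<noteq> -\<infinity>"
    using h by (simp add: F_def proper_closed_convex_def)
  have conv: "convex_on (edom F) (\<lambda>y. real_of_ereal (F y))"
    unfolding F_def using h U(3) fconv by (intro convex_on_edom_ereal_add) (auto simp: proper_closed_convex_def)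
  have xstar: "xstar \<in> edom F"
    using xstar_dom by (simp add: F_def edom_def)
  define F' where "F' = (\<lambda>i. (1 / a i) *\<^sub>R (g i - B (x i - x (i - 1))))"
  define T where "T i = real_of_ereal (ereal (a i) * (F (x i) - F xstar))" for i
  define Q where "Q i = (a i)\<^sup>2 * (dualnormB B (F' i))\<^sup>2" for i
  define r where "r i = normB B (x i - xstar)" for i
  note step = inexact_prox_step[OF conv proper a_pos[rule_format] g_sub[rule_format]
      g_small[rule_format] xstar xstar_min]
  have bound: "(\<Sum>i=1..k. T i + 1/2 * Q i) + 1/2 * (r k)\<^sup>2 \<le> 1/2 * (r 0 + (\<Sum>i=1..k. \<delta> i))\<^sup>2" for k
    by (rule accumulate_step_bound)
      (use step(2,3) \<delta>_nonneg in \<open>auto simp: T_def Q_def r_def F'_def normB_nonneg\<close>)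
  have sum_T: "(\<Sum>i=1..k. ereal (a i) * (F (x i) - F xstar)) = ereal (\<Sum>i=1..k. T i)" for k
  proof -
    have "ereal (a i) * (F (x i) - F xstar) = ereal (T i)" if "i \<in> {1..k}" for i
      using step(1)[of "i - 1"] that by (cases i) (simp_all add: T_def)
    then show ?thesis
      by simp
  qed
  show ?thesis
    unfolding Let_def F'_def[symmetric] sum_T Q_def[symmetric] r_def[symmetric]
    using bound by (simp add: sum.distrib sum_distrib_left)
qed

end
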